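(* Let $R$ be an integral domain. Then the image $\overline{\mathbf{U}_4(R)}=\mathbf{U}_4(R)/\mathbf{U}_4(R)'$ is a characteristic subgroup of $\overline{\mathbf{A}_4(R)}=\mathbf{A}_4(R)/\mathbf{U}_4(R)'$.
   Context: $\mathbf{A}_4(R)$ is the group of upper triangular $4\times4$ matrices over $R$ whose diagonal has the form $(1,u_2,u_3,1)$ with $u_2,u_3\in U(R)$. $\mathbf{U}_4(R)$ is its normal subgroup of upper unitriangular matrices and $\mathbf{U}_4(R)'=[\mathbf{U}_4(R),\mathbf{U}_4(R)]$. *)

theory Defs
  imports "HOL-Algebra.Algebra"
begin

text \<open>4x4 matrices over R, represented as functions nat => nat => R with indices 0..3
  (entries outside the index range are required to be 0 in the carriers below).\<close>

definition mat4_mult :: "(nat \<Rightarrow> nat \<Rightarrow> 'a::comm_ring_1) \<Rightarrow> (nat \<Rightarrow> nat \<Rightarrow> 'a) \<Rightarrow> (nat \<Rightarrow> nat \<Rightarrow> 'a)" where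
  "mat4_mult A B = (\<lambda>i j. if i < 4 \<and> j < 4 then (\<Sum>k<4. A i k * B k j) else 0)"

definition mat4_one :: "nat \<Rightarrow> nat \<Rightarrow> 'a::comm_ring_1" where
  "mat4_one = (\<lambda>i j. if i < 4 \<and> i = j then 1 else 0)"

definition A4_carrier :: "(nat \<Rightarrow> nat \<Rightarrow> 'a::comm_ring_1) set" where
  "A4_carrier = {M. (\<forall>i j. \<not> (i < 4 \<and> j < 4) \<longrightarrow> M i j = 0)
                  \<and> (\<forall>i j. j < i \<longrightarrow> M i j = 0)
                  \<and> M 0 0 = 1 \<and> M 3 3 = 1 \<and> M 1 1 dvd 1 \<and> M 2 2 dvd 1}"

definition U4_carrier :: "(nat \<Rightarrow> nat \<Rightarrow> 'a::comm_ring_1) set" where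
  "U4_carrier = {M. (\<forall>i j. \<not> (i < 4 \<and> j < 4) \<longrightarrow> M i j = 0)
                  \<and> (\<forall>i j. j < i \<longrightarrow> M i j = 0)
                  \<and> (\<forall>i < 4. M i i = 1)}"

definition A4 :: "(nat \<Rightarrow> nat \<Rightarrow> 'a::comm_ring_1) monoid" where
  "A4 = \<lparr>carrier = A4_carrier, monoid.mult = mat4_mult, one = mat4_one\<rparr>"

definition U4 :: "(nat \<Rightarrow> nat \<Rightarrow> 'a::comm_ring_1) monoid" where
  "U4 = \<lparr>carrier = U4_carrier, monoid.mult = mat4_mult, one = mat4_one\<rparr>"

definition characteristic_subgroup :: "'a set \<Rightarrow> ('a, 'b) monoid_scheme \<Rightarrow> bool" where
  "characteristic_subgroup H G \<longleftrightarrow> subgroup H G \<and> (\<forall>\<phi> \<in> iso G G. \<phi> ` H = H)"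

end

theory Submission
  imports Defs
begin

text \<open>Write \<open>G = A4/U4'\<close> and \<open>K\<close> for the image of \<open>U4\<close> in \<open>G\<close>. Since \<open>U4/U4'\<close> is abelian,
  \<open>K\<close> is an abelian normal subgroup of \<open>G\<close>. It is in fact the largest one, and a largest
  abelian normal subgroup is invariant under every automorphism. Let \<open>a U4'\<close> lie in some abelian normal subgroup and let
  \<open>s\<close> be the unitriangular matrix with superdiagonal \<open>(1, 0, 1)\<close>. Then \<open>a U4'\<close> commutes with
  its conjugate by \<open>s U4'\<close>. Every element of \<open>U4'\<close> has zero entries at \<open>(0,1)\<close> and \<open>(2,3)\<close>,
  so these entries are well defined on cosets, and comparing them yields
  \<open>(a\<^sub>1\<^sub>1 - 1)\<^sup>2 = (a\<^sub>2\<^sub>2 - 1)\<^sup>2 = 0\<close>. Over a domain this forces \<open>a \<in> U4\<close>.\<close>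

lemma (in group) characteristic_subgroupI_largest_abelian_normal:
  assumes K_normal: "K \<lhd> G" and K_abelian: "\<forall>x\<in>K. \<forall>y\<in>K. x \<otimes> y = y \<otimes> x"
    and largest: "\<And>N. N \<lhd> G \<Longrightarrow> \<forall>x\<in>N. \<forall>y\<in>N. x \<otimes> y = y \<otimes> x \<Longrightarrow> N \<subseteq> K"
  shows "characteristic_subgroup K G"
proof -
  have K_sub: "K \<subseteq> carrier G"
    using K_normal normal_imp_subgroup subgroup.subset by blast
  have image_sub: "\<phi> ` K \<subseteq> K" if iso: "\<phi> \<in> iso G G" for \<phi>
  proof (rule largest)
    interpret \<phi>: group_hom G G \<phi>
      using iso by (simp add: group_hom_def group_hom_axioms_def iso_def is_group)
    have "\<phi> ` carrier G = carrier G"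
      using iso by (simp add: iso_def bij_betw_def)
    then show "\<phi> ` K \<lhd> G"
      using normal.surj_hom_normal_subgroup[OF K_normal \<phi>.group_hom_axioms] by blast
    show "\<forall>x\<in>\<phi> ` K. \<forall>y\<in>\<phi> ` K. x \<otimes> y = y \<otimes> x"
    proof (intro ballI)
      fix x y assume "x \<in> \<phi> ` K" "y \<in> \<phi> ` K"
      then obtain a b where "a \<in> K" "b \<in> K" "x = \<phi> a" "y = \<phi> b" by blast
      then show "x \<otimes> y = y \<otimes> x"
        using K_abelian K_sub \<phi>.hom_mult[of a b] \<phi>.hom_mult[of b a] by auto
    qed
  qed
  have "K \<subseteq> \<phi> ` K" if iso: "\<phi> \<in> iso G G" for \<phi>
  proof
    fix k assume k: "k \<in> K"
    have "\<phi> ` carrier G = carrier G"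
      using iso by (simp add: iso_def bij_betw_def)
    then have "k = \<phi> (inv_into (carrier G) \<phi> k)"
      using k K_sub by (simp add: f_inv_into_f subset_iff)
    moreover have "inv_into (carrier G) \<phi> k \<in> K"
      using image_sub[OF iso_set_sym[OF iso]] k by blast
    ultimately show "k \<in> \<phi> ` K" by blast
  qed
  with image_sub K_normal show ?thesis
    unfolding characteristic_subgroup_def by (blast intro: normal_imp_subgroup)
qed

type_synonym 'a mat4 = "nat \<Rightarrow> nat \<Rightarrow> 'a"

definition upper_triangular4 :: "'a::zero mat4 \<Rightarrow> bool" where
  "upper_triangular4 M \<longleftrightarrow>
     (\<forall>i j. \<not> (i < 4 \<and> j < 4) \<longrightarrow> M i j = 0) \<and> (\<forall>i j. j < i \<longrightarrow> M i j = 0)"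

lemma sum_lessThan_4: "(\<Sum>k<4. f (k::nat)) = f 0 + f 1 + f 2 + (f 3 :: 'a::comm_monoid_add)"
  by (simp add: eval_nat_numeral add.assoc)

lemma upper_triangular4_below_diag:
  assumes "upper_triangular4 M"
  shows "M 1 0 = 0" "M 2 0 = 0" "M 3 0 = 0" "M 2 1 = 0" "M 3 1 = 0" "M 3 2 = 0"
  using assms by (auto simp: upper_triangular4_def)

lemma upper_triangular4_mult:
  assumes "upper_triangular4 A" "upper_triangular4 B"
  shows "upper_triangular4 (mat4_mult A B)"
  unfolding upper_triangular4_def
proof (intro conjI allI impI)
  fix i j :: nat
  assume "\<not> (i < 4 \<and> j < 4)"
  then show "mat4_mult A B i j = 0" by (auto simp: mat4_mult_def)
next
  fix i j :: nat
  assume "j < i"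
  then have "A i k * B k j = 0" for k
    using assms unfolding upper_triangular4_def by (cases "k < i") auto
  then show "mat4_mult A B i j = 0" by (simp add: mat4_mult_def)
qed

lemma upper_triangular4_mult_diag:
  assumes "upper_triangular4 A" "upper_triangular4 B" "i < 4"
  shows "mat4_mult A B i i = A i i * B i i"
proof -
  have "i = 0 \<or> i = 1 \<or> i = 2 \<or> i = 3" using assms(3) by auto
  then show ?thesis
    using upper_triangular4_below_diag[OF assms(1)] upper_triangular4_below_diag[OF assms(2)]
    by (auto simp: mat4_mult_def sum_lessThan_4)
qed

lemma upper_triangular4_mult_superdiag:
  assumes "upper_triangular4 A" "upper_triangular4 B" "i < 3"
  shows "mat4_mult A B i (i + 1) = A i i * B i (i + 1) + A i (i + 1) * B (i + 1) (i + 1)"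
proof -
  have "i = 0 \<or> i = 1 \<or> i = 2" using assms(3) by auto
  then show ?thesis
    using upper_triangular4_below_diag[OF assms(1)] upper_triangular4_below_diag[OF assms(2)]
    by (elim disjE) (simp_all add: mat4_mult_def sum_lessThan_4 eval_nat_numeral)
qed

lemma mat4_mult_assoc: "mat4_mult (mat4_mult A B) C = mat4_mult A (mat4_mult B C)"
  by (intro ext) (simp add: mat4_mult_def sum_lessThan_4 algebra_simps)

lemma upper_triangular4_one: "upper_triangular4 mat4_one"
  by (auto simp: upper_triangular4_def mat4_one_def)

lemma mat4_one_mult:
  assumes "upper_triangular4 M"
  shows "mat4_mult mat4_one M = M"
proof (intro ext)
  fix i j
  show "mat4_mult mat4_one M i j = M i j"
  proof (cases "i < 4 \<and> j < 4")
    case True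
    have "(\<Sum>k<4. mat4_one i k * M k j) = (\<Sum>k\<in>{i}. mat4_one i k * M k j)"
      by (rule sum.mono_neutral_right) (use True in \<open>auto simp: mat4_one_def\<close>)
    then show ?thesis using True by (simp add: mat4_mult_def mat4_one_def)
  next
    case False
    then show ?thesis using assms by (auto simp: mat4_mult_def upper_triangular4_def)
  qed
qed

lemma A4_carrier_iff:
  "M \<in> A4_carrier \<longleftrightarrow>
     upper_triangular4 M \<and> M 0 0 = 1 \<and> M 3 3 = 1 \<and> M 1 1 dvd 1 \<and> M 2 2 dvd 1"
  by (simp add: A4_carrier_def upper_triangular4_def)

lemma U4_carrier_iff:
  "M \<in> U4_carrier \<longleftrightarrow>
     upper_triangular4 M \<and> M 0 0 = 1 \<and> M 1 1 = 1 \<and> M 2 2 = 1 \<and> M 3 3 = 1"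
proof -
  have "(\<forall>i<4. M i i = 1) \<longleftrightarrow> M 0 0 = 1 \<and> M 1 1 = 1 \<and> M 2 2 = 1 \<and> M 3 3 = 1"
    by (auto simp: less_Suc_eq eval_nat_numeral)
  then show ?thesis by (simp add: U4_carrier_def upper_triangular4_def)
qed

lemma U4_carrier_subset_A4_carrier: "U4_carrier \<subseteq> A4_carrier"
  by (auto simp: U4_carrier_iff A4_carrier_iff)

lemma mat4_mult_A4_carrier:
  "A \<in> A4_carrier \<Longrightarrow> B \<in> A4_carrier \<Longrightarrow> mat4_mult A B \<in> A4_carrier"
  using mult_dvd_mono[of _ 1 _ 1]
  by (auto simp: A4_carrier_iff upper_triangular4_mult upper_triangular4_mult_diag)

lemma mat4_mult_U4_carrier:
  "A \<in> U4_carrier \<Longrightarrow> B \<in> U4_carrier \<Longrightarrow> mat4_mult A B \<in> U4_carrier"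
  by (simp add: U4_carrier_iff upper_triangular4_mult upper_triangular4_mult_diag)

lemma mat4_one_U4_carrier: "mat4_one \<in> U4_carrier"
  by (simp add: U4_carrier_iff upper_triangular4_one) (simp add: mat4_one_def)

lemma A4_carrier_left_inverse:
  assumes a: "a \<in> A4_carrier"
  shows "\<exists>b\<in>A4_carrier. mat4_mult b a = mat4_one"
proof -
  have ut: "upper_triangular4 a" and a00: "a 0 0 = 1" and a33: "a 3 3 = 1"
    and "a 1 1 dvd 1" "a 2 2 dvd 1"
    using a by (auto simp: A4_carrier_iff)
  then obtain u v where u: "u * a 1 1 = 1" and v: "v * a 2 2 = 1"
    by (metis dvdE mult.commute)
  define b01 where "b01 = - a 0 1 * u"
  define b02 where "b02 = - (a 0 2 + b01 * a 1 2) * v"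
  define b03 where "b03 = - (a 0 3 + b01 * a 1 3 + b02 * a 2 3)"
  define b12 where "b12 = - u * a 1 2 * v"
  define b13 where "b13 = - (u * a 1 3 + b12 * a 2 3)"
  define b23 where "b23 = - v * a 2 3"
  define b where "b = (\<lambda>(i::nat) (j::nat). if i = 0 \<and> j = 0 then 1 else if i = 0 \<and> j = 1 then b01
     else if i = 0 \<and> j = 2 then b02 else if i = 0 \<and> j = 3 then b03
     else if i = 1 \<and> j = 1 then u else if i = 1 \<and> j = 2 then b12 else if i = 1 \<and> j = 3 then b13
     else if i = 2 \<and> j = 2 then v else if i = 2 \<and> j = 3 then b23 else if i = 3 \<and> j = 3 then 1
     else 0)"
  have "b \<in> A4_carrier"
    unfolding A4_carrier_def b_def using u v by (auto intro: dvdI simp: mult.commute)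
  moreover have "mat4_mult b a i j = mat4_one i j" for i j
  proof (cases "i < 4 \<and> j < 4")
    case True
    then have "i = 0 \<or> i = 1 \<or> i = 2 \<or> i = 3" "j = 0 \<or> j = 1 \<or> j = 2 \<or> j = 3" by auto
    then show ?thesis
      using u v a00 a33 upper_triangular4_below_diag[OF ut]
      by (elim disjE; simp add: mat4_mult_def mat4_one_def sum_lessThan_4 b_def b01_def b02_def
          b03_def b12_def b13_def b23_def; (simp add: mult.assoc)?; simp add: algebra_simps)
  next
    case False
    then show ?thesis by (auto simp: mat4_mult_def mat4_one_def)
  qed
  ultimately show ?thesis by blast
qed

lemma group_A4: "group (A4 :: 'a::comm_ring_1 mat4 monoid)"
proof (rule groupI)
  fix x y z :: "'a mat4"
  show "\<one>\<^bsub>A4\<^esub> \<in> carrier (A4 :: 'a mat4 monoid)"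
    using mat4_one_U4_carrier U4_carrier_subset_A4_carrier by (auto simp: A4_def)
  show "x \<otimes>\<^bsub>A4\<^esub> y \<otimes>\<^bsub>A4\<^esub> z = x \<otimes>\<^bsub>A4\<^esub> (y \<otimes>\<^bsub>A4\<^esub> z)"
    by (simp add: A4_def mat4_mult_assoc)
  assume x: "x \<in> carrier A4"
  then show "\<one>\<^bsub>A4\<^esub> \<otimes>\<^bsub>A4\<^esub> x = x"
    by (simp add: A4_def A4_carrier_iff mat4_one_mult)
  show "\<exists>y\<in>carrier A4. y \<otimes>\<^bsub>A4\<^esub> x = \<one>\<^bsub>A4\<^esub>"
    using x A4_carrier_left_inverse by (simp add: A4_def)
  assume "y \<in> carrier A4"
  with x show "x \<otimes>\<^bsub>A4\<^esub> y \<in> carrier A4"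
    by (simp add: A4_def mat4_mult_A4_carrier)
qed

lemma A4_simps [simp]:
  "carrier A4 = A4_carrier" "monoid.mult A4 = mat4_mult" "one A4 = mat4_one"
  by (simp_all add: A4_def)

lemma U4_eq: "U4 = A4\<lparr>carrier := U4_carrier\<rparr>"
  by (simp add: U4_def A4_def)

lemma carrier_U4: "carrier U4 = U4_carrier"
  by (simp add: U4_def)

lemma A4_inv_diag:
  fixes x :: "'a::comm_ring_1 mat4"
  assumes x: "x \<in> A4_carrier" and i: "i < 4"
  shows "x i i * (inv\<^bsub>A4\<^esub> x) i i = 1"
proof -
  have "inv\<^bsub>A4\<^esub> x \<in> A4_carrier" and "mat4_mult x (inv\<^bsub>A4\<^esub> x) = mat4_one"
    using group.inv_closed[OF group_A4] group.r_inv[OF group_A4] x by auto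
  then show ?thesis
    using upper_triangular4_mult_diag[of x "inv\<^bsub>A4\<^esub> x" i] x i
    by (simp add: A4_carrier_iff mat4_one_def)
qed

lemma U4_inv:
  fixes a :: "'a::comm_ring_1 mat4"
  assumes a: "a \<in> U4_carrier"
  shows "inv\<^bsub>A4\<^esub> a \<in> U4_carrier"
    and "i < 3 \<Longrightarrow> (inv\<^bsub>A4\<^esub> a) i (i + 1) = - a i (i + 1)"
proof -
  define b where "b = inv\<^bsub>A4\<^esub> a"
  have aA: "a \<in> A4_carrier" using a U4_carrier_subset_A4_carrier by blast
  then have "b \<in> A4_carrier" and ab: "mat4_mult a b = mat4_one"
    using group.inv_closed[OF group_A4] group.r_inv[OF group_A4] by (auto simp: b_def)
  then have ut: "upper_triangular4 a" "upper_triangular4 b"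
    using aA by (simp_all add: A4_carrier_iff)
  have a_diag: "a i i = 1" if "i < 4" for i
    using a that by (simp add: U4_carrier_def)
  have b_diag: "b i i = 1" if "i < 4" for i
    using A4_inv_diag[OF aA that] a_diag[OF that] by (simp add: b_def)
  then show "inv\<^bsub>A4\<^esub> a \<in> U4_carrier"
    using ut by (simp add: U4_carrier_iff b_def)
  assume i: "i < 3"
  have "a i i * b i (i + 1) + a i (i + 1) * b (i + 1) (i + 1) = 0"
    using upper_triangular4_mult_superdiag[OF ut i] ab by (simp add: mat4_one_def)
  then show "(inv\<^bsub>A4\<^esub> a) i (i + 1) = - a i (i + 1)"
    using a_diag b_diag i by (simp add: b_def eq_neg_iff_add_eq_0)
qed

lemma subgroup_U4_carrier: "subgroup U4_carrier (A4 :: 'a::comm_ring_1 mat4 monoid)"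
  by (rule group.subgroupI[OF group_A4])
    (use U4_carrier_subset_A4_carrier mat4_one_U4_carrier U4_inv mat4_mult_U4_carrier in auto)

lemma normal_U4_carrier: "U4_carrier \<lhd> (A4 :: 'a::comm_ring_1 mat4 monoid)"
  unfolding group.normal_inv_iff[OF group_A4]
proof (intro conjI subgroup_U4_carrier ballI)
  fix x h :: "'a mat4"
  assume x: "x \<in> carrier A4" and h: "h \<in> U4_carrier"
  let ?y = "inv\<^bsub>A4\<^esub> x"
  have ut: "upper_triangular4 x" "upper_triangular4 ?y" "upper_triangular4 h"
    using x h group.inv_closed[OF group_A4] U4_carrier_subset_A4_carrier
    by (auto simp: A4_carrier_iff)
  have "mat4_mult (mat4_mult x h) ?y i i = 1" if i: "i < 4" for i
    using upper_triangular4_mult_diag[OF upper_triangular4_mult[OF ut(1,3)] ut(2) i]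
      upper_triangular4_mult_diag[OF ut(1,3) i] A4_inv_diag[of x i] h x i
    by (simp add: U4_carrier_def)
  then show "x \<otimes>\<^bsub>A4\<^esub> h \<otimes>\<^bsub>A4\<^esub> inv\<^bsub>A4\<^esub> x \<in> U4_carrier"
    using upper_triangular4_mult[OF upper_triangular4_mult[OF ut(1,3)] ut(2)]
    by (simp add: U4_carrier_def upper_triangular4_def)
qed

lemma U4_mult_superdiag:
  assumes "A \<in> U4_carrier" "B \<in> U4_carrier" "i < 3"
  shows "mat4_mult A B i (i + 1) = A i (i + 1) + B i (i + 1)"
  using upper_triangular4_mult_superdiag[of A B i] assms by (simp add: U4_carrier_def upper_triangular4_def)

lemma subgroup_superdiag_zero:
  "subgroup {M \<in> U4_carrier. M 0 1 = 0 \<and> M 2 3 = 0} (A4 :: 'a::comm_ring_1 mat4 monoid)"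
proof (rule group.subgroupI[OF group_A4])
  show "{M \<in> U4_carrier. M 0 1 = 0 \<and> M 2 3 = 0} \<subseteq> carrier (A4 :: 'a mat4 monoid)"
    using U4_carrier_subset_A4_carrier by auto
  have "mat4_one \<in> {M \<in> U4_carrier. M 0 1 = 0 \<and> M 2 3 = (0::'a)}"
    using mat4_one_U4_carrier by (simp add: mat4_one_def)
  then show "{M \<in> U4_carrier. M 0 1 = 0 \<and> M 2 3 = 0} \<noteq> ({} :: 'a mat4 set)"
    by blast
  show "inv\<^bsub>A4\<^esub> a \<in> {M \<in> U4_carrier. M 0 1 = 0 \<and> M 2 3 = 0}"
    if "a \<in> {M \<in> U4_carrier. M 0 1 = 0 \<and> M 2 3 = 0}" for a :: "'a mat4"
    using that U4_inv[of a] U4_inv(2)[of a 0] U4_inv(2)[of a 2] by simp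
  show "a \<otimes>\<^bsub>A4\<^esub> b \<in> {M \<in> U4_carrier. M 0 1 = 0 \<and> M 2 3 = 0}"
    if "a \<in> {M \<in> U4_carrier. M 0 1 = 0 \<and> M 2 3 = 0}" "b \<in> {M \<in> U4_carrier. M 0 1 = 0 \<and> M 2 3 = 0}"
    for a b :: "'a mat4"
    using that mat4_mult_U4_carrier[of a b] U4_mult_superdiag[of a b 0] U4_mult_superdiag[of a b 2]
    by simp
qed

abbreviation U4_derived :: "'a::comm_ring_1 mat4 set" where
  "U4_derived \<equiv> derived U4 (carrier U4)"

lemma U4_derived_eq: "U4_derived = derived A4 U4_carrier"
  unfolding carrier_U4 unfolding U4_eq
  by (rule group.derived_consistent[OF group_A4 subset_refl subgroup_U4_carrier])

lemma normal_U4_derived: "U4_derived \<lhd> A4"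
  unfolding U4_derived_eq by (rule group.derived_is_normal[OF group_A4 normal_U4_carrier])

text \<open>The entries at positions (0,1) and (2,3) are additive on \<open>U4\<close>, so commutators kill them.\<close>

lemma U4_derived_superdiag_zero:
  fixes h :: "'a::comm_ring_1 mat4"
  assumes "h \<in> U4_derived"
  shows "h \<in> U4_carrier" "h 0 1 = 0" "h 2 3 = 0"
proof -
  have "derived_set A4 U4_carrier \<subseteq> {M \<in> U4_carrier. M 0 1 = 0 \<and> M 2 3 = (0::'a)}"
  proof
    fix c :: "'a mat4"
    assume "c \<in> derived_set A4 U4_carrier"
    then obtain u w :: "'a mat4" where u: "u \<in> U4_carrier" and w: "w \<in> U4_carrier"
      and c: "c = u \<otimes>\<^bsub>A4\<^esub> w \<otimes>\<^bsub>A4\<^esub> inv\<^bsub>A4\<^esub> u \<otimes>\<^bsub>A4\<^esub> inv\<^bsub>A4\<^esub> w"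
      by auto
    note inv = U4_inv[OF u] U4_inv[OF w]
    show "c \<in> {M \<in> U4_carrier. M 0 1 = 0 \<and> M 2 3 = 0}"
      unfolding c using u w inv inv(2)[of 0] inv(2)[of 2] inv(4)[of 0] inv(4)[of 2]
      by (simp add: mat4_mult_U4_carrier U4_mult_superdiag[of _ _ 0, simplified]
          U4_mult_superdiag[of _ _ 2, simplified])
  qed
  then have "U4_derived \<subseteq> {M \<in> U4_carrier. M 0 1 = 0 \<and> M 2 3 = (0::'a)}"
    unfolding U4_derived_eq unfolding derived_def
    by (rule group.generate_subgroup_incl[OF group_A4 _ subgroup_superdiag_zero])
  then show "h \<in> U4_carrier" "h 0 1 = 0" "h 2 3 = 0"
    using assms by auto
qed

lemma U4_derived_coset_superdiag:
  fixes a b :: "'a::comm_ring_1 mat4"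
  assumes a: "a \<in> A4_carrier" and b: "b \<in> A4_carrier"
    and eq: "U4_derived #>\<^bsub>A4\<^esub> a = U4_derived #>\<^bsub>A4\<^esub> b"
  shows "a 0 1 = b 0 1" "a 2 3 = b 2 3"
proof -
  have "a \<in> U4_derived #>\<^bsub>A4\<^esub> b"
    using group.rcos_self[OF group_A4 _ normal_imp_subgroup[OF normal_U4_derived]] a eq by force
  then obtain h where h: "h \<in> U4_derived" and a_eq: "a = mat4_mult h b"
    unfolding r_coset_def by auto
  note h_entries = U4_derived_superdiag_zero[OF h]
  have ut: "upper_triangular4 h" "upper_triangular4 b"
    using h_entries(1) b by (simp_all add: U4_carrier_iff A4_carrier_iff)
  show "a 0 1 = b 0 1" "a 2 3 = b 2 3"
    unfolding a_eq using upper_triangular4_mult_superdiag[OF ut, of 0]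
      upper_triangular4_mult_superdiag[OF ut, of 2] h_entries b
    by (simp_all add: U4_carrier_iff A4_carrier_iff)
qed

lemma A4_mult_entries:
  assumes "a \<in> A4_carrier" "b \<in> A4_carrier"
  shows "mat4_mult a b 0 1 = b 0 1 + a 0 1 * b 1 1"
    and "mat4_mult a b 2 3 = a 2 2 * b 2 3 + a 2 3"
    and "i < 4 \<Longrightarrow> mat4_mult a b i i = a i i * b i i"
  using assms upper_triangular4_mult_superdiag[of a b 0] upper_triangular4_mult_superdiag[of a b 2]
    upper_triangular4_mult_diag[of a b i]
  by (simp_all add: A4_carrier_iff)

lemma normal_U4_image: "(\<lambda>u. U4_derived #>\<^bsub>A4\<^esub> u) ` U4_carrier \<lhd> A4 Mod U4_derived"
proof -
  interpret H: normal U4_derived A4 by (rule normal_U4_derived)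
  have "group_hom A4 (A4 Mod U4_derived) (\<lambda>a. U4_derived #>\<^bsub>A4\<^esub> a)"
    using H.r_coset_hom_Mod H.factorgroup_is_group group_A4
    by (simp add: group_hom_def group_hom_axioms_def)
  moreover have "(\<lambda>a. U4_derived #>\<^bsub>A4\<^esub> a) ` carrier A4 = carrier (A4 Mod U4_derived)"
    by (simp add: carrier_FactGroup)
  ultimately show ?thesis
    by (rule normal.surj_hom_normal_subgroup[OF normal_U4_carrier])
qed

lemma U4_image_abelian:
  assumes "x \<in> (\<lambda>u. U4_derived #>\<^bsub>A4\<^esub> u) ` U4_carrier"
    and "y \<in> (\<lambda>u. U4_derived #>\<^bsub>A4\<^esub> u) ` U4_carrier"
  shows "x \<otimes>\<^bsub>A4 Mod U4_derived\<^esub> y = y \<otimes>\<^bsub>A4 Mod U4_derived\<^esub> x"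
proof -
  have "group U4"
    unfolding U4_eq by (rule group.subgroup_imp_group[OF group_A4 subgroup_U4_carrier])
  then interpret comm_group "U4 Mod U4_derived"
    by (rule group.derived_quot_is_comm_group)
  have same_cosets: "r_coset U4 = r_coset A4" "set_mult U4 = set_mult A4"
    by (simp_all add: fun_eq_iff r_coset_def set_mult_def U4_def A4_def)
  have "carrier (U4 Mod U4_derived) = (\<lambda>u. U4_derived #>\<^bsub>A4\<^esub> u) ` U4_carrier"
    by (simp add: carrier_FactGroup carrier_U4 same_cosets)
  then have "x \<otimes>\<^bsub>U4 Mod U4_derived\<^esub> y = y \<otimes>\<^bsub>U4 Mod U4_derived\<^esub> x"
    using assms by (intro m_comm) auto
  then show ?thesis
    by (simp add: same_cosets)
qed

lemma U4_derived_coset_mult: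
  assumes "a \<in> A4_carrier" "b \<in> A4_carrier"
  shows "(U4_derived #>\<^bsub>A4\<^esub> a) \<otimes>\<^bsub>A4 Mod U4_derived\<^esub> (U4_derived #>\<^bsub>A4\<^esub> b)
           = U4_derived #>\<^bsub>A4\<^esub> mat4_mult a b"
  using normal.rcos_sum[OF normal_U4_derived, of a b] assms by simp

lemma U4_derived_coset_inv:
  assumes "a \<in> A4_carrier"
  shows "inv\<^bsub>A4 Mod U4_derived\<^esub> (U4_derived #>\<^bsub>A4\<^esub> a) = U4_derived #>\<^bsub>A4\<^esub> inv\<^bsub>A4\<^esub> a"
proof -
  have "U4_derived #>\<^bsub>A4\<^esub> a \<in> carrier (A4 Mod U4_derived)"
    using assms by (auto simp: carrier_FactGroup)
  then have "inv\<^bsub>A4 Mod U4_derived\<^esub> (U4_derived #>\<^bsub>A4\<^esub> a) = set_inv\<^bsub>A4\<^esub> (U4_derived #>\<^bsub>A4\<^esub> a)"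
    by (rule normal.inv_FactGroup[OF normal_U4_derived])
  also have "\<dots> = U4_derived #>\<^bsub>A4\<^esub> inv\<^bsub>A4\<^esub> a"
    using assms by (simp add: normal.rcos_inv[OF normal_U4_derived])
  finally show ?thesis .
qed

definition shear_101 :: "'a::comm_ring_1 mat4" where
  "shear_101 = (\<lambda>i j. if i < 4 \<and> i = j then 1 else if (i, j) = (0, 1) \<or> (i, j) = (2, 3) then 1 else 0)"

lemma shear_101_U4_carrier: "shear_101 \<in> U4_carrier"
  by (auto simp: U4_carrier_iff shear_101_def upper_triangular4_def)

lemma shear_101_conjugate_entries:
  fixes a :: "'a::comm_ring_1 mat4"
  defines "c \<equiv> mat4_mult (mat4_mult shear_101 a) (inv\<^bsub>A4\<^esub> shear_101)"
  assumes a: "a \<in> A4_carrier"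
  shows "c \<in> A4_carrier" and "c 0 1 = a 0 1 + a 1 1 - 1" and "c 2 3 = a 2 3 + 1 - a 2 2"
    and "c 1 1 = a 1 1" and "c 2 2 = a 2 2"
proof -
  let ?s = "shear_101 :: 'a mat4" and ?n = "inv\<^bsub>A4\<^esub> (shear_101 :: 'a mat4)"
  let ?sa = "mat4_mult ?s a"
  have n: "?n \<in> U4_carrier" "?n 0 1 = - 1" "?n 2 3 = - 1"
    using U4_inv[OF shear_101_U4_carrier] U4_inv(2)[OF shear_101_U4_carrier, of 0]
      U4_inv(2)[OF shear_101_U4_carrier, of 2]
    by (simp_all add: shear_101_def)
  have in_A4: "?s \<in> A4_carrier" "?n \<in> A4_carrier" "?sa \<in> A4_carrier"
    using shear_101_U4_carrier n(1) U4_carrier_subset_A4_carrier a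
    by (auto intro!: mat4_mult_A4_carrier)
  then show "c \<in> A4_carrier"
    by (simp add: c_def mat4_mult_A4_carrier)
  have diag: "?s 1 1 = 1" "?s 2 2 = 1" "?n 1 1 = 1" "?n 2 2 = 1"
    using shear_101_U4_carrier[where 'a = 'a] n(1) by (simp_all add: U4_carrier_iff)
  have sa: "?sa 0 1 = a 0 1 + a 1 1" "?sa 2 3 = a 2 3 + 1" "?sa 1 1 = a 1 1" "?sa 2 2 = a 2 2"
    using A4_mult_entries[OF in_A4(1) a] diag a by (simp_all add: shear_101_def A4_carrier_iff)
  show "c 0 1 = a 0 1 + a 1 1 - 1" "c 2 3 = a 2 3 + 1 - a 2 2" "c 1 1 = a 1 1" "c 2 2 = a 2 2"
    unfolding c_def using A4_mult_entries[OF in_A4(3,2)] sa n diag by simp_all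
qed

lemma U4_carrier_if_commutes_with_shear_conjugate:
  fixes a :: "'a::idom mat4"
  defines "c \<equiv> mat4_mult (mat4_mult shear_101 a) (inv\<^bsub>A4\<^esub> shear_101)"
  assumes a: "a \<in> A4_carrier"
    and comm: "U4_derived #>\<^bsub>A4\<^esub> mat4_mult a c = U4_derived #>\<^bsub>A4\<^esub> mat4_mult c a"
  shows "a \<in> U4_carrier"
proof -
  note c_entries = shear_101_conjugate_entries[OF a, folded c_def]
  have "mat4_mult a c 0 1 = mat4_mult c a 0 1" "mat4_mult a c 2 3 = mat4_mult c a 2 3"
    using U4_derived_coset_superdiag[OF _ _ comm] a c_entries(1)
    by (simp_all add: mat4_mult_A4_carrier)
  then have "c 0 1 + a 0 1 * c 1 1 = a 0 1 + c 0 1 * a 1 1"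
    and "a 2 2 * c 2 3 + a 2 3 = c 2 2 * a 2 3 + c 2 3"
    using A4_mult_entries[OF a c_entries(1)] A4_mult_entries[OF c_entries(1) a] a c_entries(1)
    by (simp_all add: A4_carrier_iff)
  then have eq01: "(a 0 1 + a 1 1 - 1) + a 0 1 * a 1 1 = a 0 1 + (a 0 1 + a 1 1 - 1) * a 1 1"
    and eq23: "a 2 2 * (a 2 3 + 1 - a 2 2) + a 2 3 = a 2 2 * a 2 3 + (a 2 3 + 1 - a 2 2)"
    by (simp_all only: c_entries(2-5))
  have "a 1 1 = 1"
  proof -
    have "(a 1 1 - 1) * (a 1 1 - 1)
        = (a 0 1 + (a 0 1 + a 1 1 - 1) * a 1 1) - ((a 0 1 + a 1 1 - 1) + a 0 1 * a 1 1)"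
      by (simp add: algebra_simps)
    also have "\<dots> = 0"
      by (simp only: eq01 diff_self)
    finally show ?thesis by simp
  qed
  moreover have "a 2 2 = 1"
  proof -
    have "(a 2 2 - 1) * (a 2 2 - 1)
        = (a 2 2 * a 2 3 + (a 2 3 + 1 - a 2 2)) - (a 2 2 * (a 2 3 + 1 - a 2 2) + a 2 3)"
      by (simp add: algebra_simps)
    also have "\<dots> = 0"
      by (simp only: eq23 diff_self)
    finally show ?thesis by simp
  qed
  ultimately show ?thesis
    using a by (simp add: A4_carrier_iff U4_carrier_iff)
qed

lemma abelian_normal_subset_U4_image:
  fixes N :: "'a::idom mat4 set set"
  assumes N: "N \<lhd> A4 Mod U4_derived"
    and abelian: "\<forall>x\<in>N. \<forall>y\<in>N. x \<otimes>\<^bsub>A4 Mod U4_derived\<^esub> y = y \<otimes>\<^bsub>A4 Mod U4_derived\<^esub> x"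
  shows "N \<subseteq> (\<lambda>u. U4_derived #>\<^bsub>A4\<^esub> u) ` U4_carrier"
proof
  fix b assume b: "b \<in> N"
  interpret N: normal N "A4 Mod U4_derived" by (rule N)
  obtain a where a: "a \<in> A4_carrier" and b_eq: "b = U4_derived #>\<^bsub>A4\<^esub> a"
    using N.subset b by (auto simp: carrier_FactGroup)
  let ?s = "shear_101 :: 'a mat4"
  define c where "c = mat4_mult (mat4_mult ?s a) (inv\<^bsub>A4\<^esub> ?s)"
  have s: "?s \<in> A4_carrier" "inv\<^bsub>A4\<^esub> ?s \<in> A4_carrier"
    using shear_101_U4_carrier U4_carrier_subset_A4_carrier U4_inv(1) by blast+
  then have c_A4: "c \<in> A4_carrier"
    using a by (simp add: c_def mat4_mult_A4_carrier)
  have "U4_derived #>\<^bsub>A4\<^esub> ?s \<in> carrier (A4 Mod U4_derived)"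
    using s by (auto simp: carrier_FactGroup)
  then have "(U4_derived #>\<^bsub>A4\<^esub> ?s) \<otimes>\<^bsub>A4 Mod U4_derived\<^esub> b \<otimes>\<^bsub>A4 Mod U4_derived\<^esub>
      inv\<^bsub>A4 Mod U4_derived\<^esub> (U4_derived #>\<^bsub>A4\<^esub> ?s) \<in> N"
    using b N.inv_op_closed2 by blast
  then have conj: "U4_derived #>\<^bsub>A4\<^esub> c \<in> N"
    unfolding b_eq U4_derived_coset_inv[OF s(1)] U4_derived_coset_mult[OF s(1) a]
      U4_derived_coset_mult[OF mat4_mult_A4_carrier[OF s(1) a] s(2)] c_def .
  have "b \<otimes>\<^bsub>A4 Mod U4_derived\<^esub> (U4_derived #>\<^bsub>A4\<^esub> c)
      = (U4_derived #>\<^bsub>A4\<^esub> c) \<otimes>\<^bsub>A4 Mod U4_derived\<^esub> b"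
    using abelian b conj by blast
  then have "U4_derived #>\<^bsub>A4\<^esub> mat4_mult a c = U4_derived #>\<^bsub>A4\<^esub> mat4_mult c a"
    unfolding b_eq U4_derived_coset_mult[OF a c_A4] U4_derived_coset_mult[OF c_A4 a] .
  then have "a \<in> U4_carrier"
    using U4_carrier_if_commutes_with_shear_conjugate a unfolding c_def by blast
  then show "b \<in> (\<lambda>u. U4_derived #>\<^bsub>A4\<^esub> u) ` U4_carrier"
    using b_eq by blast
qed

theorem mainTheorem10:
  shows "characteristic_subgroup
           ((\<lambda>u. derived U4 (carrier U4) #>\<^bsub>A4\<^esub> u) ` carrier (U4 :: (nat \<Rightarrow> nat \<Rightarrow> 'a::idom) monoid))
           (A4 Mod (derived U4 (carrier U4)))"
proof -
  interpret G: group "A4 Mod (U4_derived :: 'a mat4 set)"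
    by (rule normal.factorgroup_is_group[OF normal_U4_derived])
  show ?thesis
  proof (rule G.characteristic_subgroupI_largest_abelian_normal)
    show "(\<lambda>u. U4_derived #>\<^bsub>A4\<^esub> u) ` carrier U4 \<lhd> A4 Mod (U4_derived :: 'a mat4 set)"
      by (rule normal_U4_image[folded carrier_U4])
    show "\<forall>x\<in>(\<lambda>u. U4_derived #>\<^bsub>A4\<^esub> u) ` carrier U4. \<forall>y\<in>(\<lambda>u. U4_derived #>\<^bsub>A4\<^esub> u) ` carrier U4.
        x \<otimes>\<^bsub>A4 Mod (U4_derived :: 'a mat4 set)\<^esub> y = y \<otimes>\<^bsub>A4 Mod U4_derived\<^esub> x"
      using U4_image_abelian[folded carrier_U4] by blast
  qed (rule abelian_normal_subset_U4_image[folded carrier_U4])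
qed

end
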